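(* Let $h_1,\dots,h_{2k}$ satisfy the FFD relations with $h_j^2=b_j^2\mathbb{1}$, $b_j\neq0$, and let $\theta_1,\dots,\theta_{2k}$ be arbitrary complex numbers with $\cos\theta_j\neq0$. Write $c_j:=\cos\theta_j$, $h'_j:=\sin\theta_j\,b_j^{-1}h_j$, with the conventions $c_j:=1$, $h'_j:=0$ for $j\le0$. Then $$\mathcal{V}_{2k}=\mathcal{V}_{2k-2}+\big(c_{2k-2}h'_{2k}+c_{2k}c_{2k-2}c_{2k-3}h'_{2k-1}+c_{2k-5}h'_{2k-2}h'_{2k-3}h'_{2k}\big)\mathcal{V}_{2k-4}+c_{2k-4}c_{2k-5}h'_{2k}h'_{2k-3}\mathcal{V}_{2k-6}+c_{2k-4}c_{2k-5}c_{2k-6}c_{2k-7}h'_{2k-5}h'_{2k-2}h'_{2k-3}h'_{2k}\mathcal{V}_{2k-8},$$ and $$\mathcal{V}_{2k-1}=\mathcal{V}_{2k-2}+c_{2k-2}c_{2k-3}h'_{2k-1}\mathcal{V}_{2k-4},$$ where $\mathcal{V}_j:=\mathbb{1}$ for $j\le0$.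
   Context: FFD relations: $h_mh_{m+1}=-h_{m+1}h_m$, $h_mh_{m+2}=-h_{m+2}h_m$, $h_mh_l=h_lh_m$ for $|l-m|>2$, $h_m^2=b_m^2\mathbb{1}$, in a unital associative complex algebra. Local gates $g_j:=\cos(\theta_j/2)\mathbb{1}+\sin(\theta_j/2)\,b_j^{-1}h_j$. For $1\le n\le k$: $G_{2n}:=(g_2g_1)(g_4g_3)\cdots(g_{2n}g_{2n-1})$, $G_{2n}^{\top}:=(g_{2n-1}g_{2n})\cdots(g_3g_4)(g_1g_2)$ (reversed order), $\mathcal{V}_{2n}:=G_{2n}G_{2n}^{\top}$; $G_{2n-1}$ and $\mathcal{V}_{2n-1}$ are obtained from $G_{2n}$, $\mathcal{V}_{2n}$ by setting $\theta_{2n}=0$ (i.e. $g_{2n}=\mathbb{1}$). All $\mathcal{V}_j$ use the same angles $\theta_1,\theta_2,\dots$. *)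

theory Defs
  imports Complex_Main
begin

text \<open>A unital associative complex algebra is modelled as a ring 'a :: ring_1 together
with a unital ring homomorphism emb from the complex numbers into the centre of 'a;
scalar multiplication c x is emb c * x.\<close>

definition complex_alg_emb :: "(complex \<Rightarrow> 'a::ring_1) \<Rightarrow> bool" where
  "complex_alg_emb emb \<longleftrightarrow>
     (\<forall>x y. emb (x + y) = emb x + emb y) \<and>
     (\<forall>x y. emb (x * y) = emb x * emb y) \<and>
     emb 1 = 1 \<and>
     (\<forall>x a. emb x * a = a * emb x)"

definition FFD :: "(complex \<Rightarrow> 'a::ring_1) \<Rightarrow> nat \<Rightarrow> (nat \<Rightarrow> 'a) \<Rightarrow> (nat \<Rightarrow> complex) \<Rightarrow> bool" where
  "FFD emb N h b \<longleftrightarrow>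
     (\<forall>m. 1 \<le> m \<and> m + 1 \<le> N \<longrightarrow> h m * h (m+1) = - (h (m+1) * h m)) \<and>
     (\<forall>m. 1 \<le> m \<and> m + 2 \<le> N \<longrightarrow> h m * h (m+2) = - (h (m+2) * h m)) \<and>
     (\<forall>m l. 1 \<le> m \<and> m \<le> N \<and> 1 \<le> l \<and> l \<le> N \<and> (m + 2 < l \<or> l + 2 < m)
             \<longrightarrow> h m * h l = h l * h m) \<and>
     (\<forall>m. 1 \<le> m \<and> m \<le> N \<longrightarrow> h m * h m = emb ((b m)^2))"

definition gate :: "(complex \<Rightarrow> 'a::ring_1) \<Rightarrow> (nat \<Rightarrow> complex) \<Rightarrow> (nat \<Rightarrow> 'a)
                    \<Rightarrow> (nat \<Rightarrow> complex) \<Rightarrow> nat \<Rightarrow> 'a" where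
  "gate emb b h \<theta> j = emb (cos (\<theta> j / 2)) + emb (sin (\<theta> j / 2) / b j) * h j"

definition Gprod :: "(nat \<Rightarrow> 'a::ring_1) \<Rightarrow> nat \<Rightarrow> 'a" where
  "Gprod g n = prod_list (map (\<lambda>m. g (2*m) * g (2*m - 1)) [1..<n+1])"

definition GprodT :: "(nat \<Rightarrow> 'a::ring_1) \<Rightarrow> nat \<Rightarrow> 'a" where
  "GprodT g n = prod_list (map (\<lambda>m. g (2*m - 1) * g (2*m)) (rev [1..<n+1]))"

definition Veven :: "(complex \<Rightarrow> 'a::ring_1) \<Rightarrow> (nat \<Rightarrow> complex) \<Rightarrow> (nat \<Rightarrow> 'a)
                    \<Rightarrow> (nat \<Rightarrow> complex) \<Rightarrow> nat \<Rightarrow> 'a" where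
  "Veven emb b h \<theta> n = Gprod (gate emb b h \<theta>) n * GprodT (gate emb b h \<theta>) n"

definition Vop :: "(complex \<Rightarrow> 'a::ring_1) \<Rightarrow> (nat \<Rightarrow> complex) \<Rightarrow> (nat \<Rightarrow> 'a)
                    \<Rightarrow> (nat \<Rightarrow> complex) \<Rightarrow> int \<Rightarrow> 'a" where
  "Vop emb b h \<theta> j =
     (if j \<le> 0 then 1
      else if even j then Veven emb b h \<theta> (nat j div 2)
      else Veven emb b h (\<theta>(nat j + 1 := 0)) ((nat j + 1) div 2))"

definition cc :: "(nat \<Rightarrow> complex) \<Rightarrow> int \<Rightarrow> complex" where
  "cc \<theta> j = (if j \<le> 0 then 1 else cos (\<theta> (nat j)))"

definition hp :: "(complex \<Rightarrow> 'a::ring_1) \<Rightarrow> (nat \<Rightarrow> complex) \<Rightarrow> (nat \<Rightarrow> 'a)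
                    \<Rightarrow> (nat \<Rightarrow> complex) \<Rightarrow> int \<Rightarrow> 'a" where
  "hp emb b h \<theta> j = (if j \<le> 0 then 0 else emb (sin (\<theta> (nat j)) / b (nat j)) * h (nat j))"

end

theory Submission
  imports Defs
begin

(* Peeling off the outermost pair of gates,
     V_(2n+2) = G_2n (g_(2n+2) g_(2n+1) 1 g_(2n+1) g_(2n+2)) G_2n^T,
   reduces everything to conjugating short words x in the h' by a single gate. Since
   g_j^2 = 1 + h'_j, we get g_j x g_j = x (1 + h'_j) when x commutes with h_j; when x
   anticommutes with h_j, g_j x = x g~_j for the gate g~_j of angle -theta_j, and g~_j g_j = c_j,
   so g_j x g_j = c_j x. By the FFD relations h'_i commutes with h_j for |i - j| > 2 and
   anticommutes with it for 0 < |i - j| <= 2. For x = 1, h'_(2n+1), h'_(2n+2) and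
   h'_(2n+1) h'_(2n+2) this expresses G_2n x G_2n^T through the same words at n - 1 and n - 2;
   substituting these four recurrences into each other and reordering the products of the h'
   gives the formula for V_2k, and V_(2k-1) is the case g_2k = 1. *)

lemma commute_mult:
  fixes a c x :: "'a::semigroup_mult"
  shows "a * x = x * a \<Longrightarrow> c * x = x * c \<Longrightarrow> a * c * x = x * (a * c)"
  by (metis mult.assoc)

lemma anticommute_mult_anticommute:
  fixes a c x :: "'a::ring_1"
  assumes "a * x = - (x * a)" and "c * x = - (x * c)"
  shows "a * c * x = x * (a * c)"
proof -
  have "a * c * x = - (a * x * c)"
    using assms(2) by (simp add: mult.assoc)
  also have "\<dots> = x * (a * c)"
    using assms(1) by (simp add: mult.assoc)
  finally show ?thesis .
qed

lemma anticommute_mult_commute: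
  fixes a c x :: "'a::ring_1"
  assumes "a * x = - (x * a)" and "c * x = x * c"
  shows "a * c * x = - (x * (a * c))"
proof -
  have "a * c * x = a * x * c"
    using assms(2) by (simp add: mult.assoc)
  also have "\<dots> = - (x * (a * c))"
    using assms(1) by (simp add: mult.assoc)
  finally show ?thesis .
qed

lemma left_commute_of_commute:
  fixes a b z :: "'a::semigroup_mult"
  shows "a * b = b * a \<Longrightarrow> a * (b * z) = b * (a * z)"
  by (simp flip: mult.assoc)

lemma left_anticommute_of_anticommute:
  fixes a b z :: "'a::ring_1"
  shows "a * b = - (b * a) \<Longrightarrow> a * (b * z) = - (b * (a * z))"
  by (simp flip: mult.assoc)

lemma Gprod_0 [simp]: "Gprod g 0 = 1"
  by (simp add: Gprod_def)

lemma Gprod_Suc [simp]: "Gprod g (Suc n) = Gprod g n * (g (2*n+2) * g (2*n+1))"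
  by (simp add: Gprod_def)

lemma GprodT_0 [simp]: "GprodT g 0 = 1"
  by (simp add: GprodT_def)

lemma GprodT_Suc [simp]: "GprodT g (Suc n) = g (2*n+1) * g (2*n+2) * GprodT g n"
  by (simp add: GprodT_def)

lemma Gprod_cong: "(\<And>j. 1 \<le> j \<Longrightarrow> j \<le> 2*n \<Longrightarrow> g j = g' j) \<Longrightarrow> Gprod g n = Gprod g' n"
  by (induction n) auto

lemma GprodT_cong: "(\<And>j. 1 \<le> j \<Longrightarrow> j \<le> 2*n \<Longrightarrow> g j = g' j) \<Longrightarrow> GprodT g n = GprodT g' n"
  by (induction n) auto

lemma Gprod_commute:
  "(\<And>j. 1 \<le> j \<Longrightarrow> j \<le> 2*n \<Longrightarrow> g j * x = x * g j) \<Longrightarrow> Gprod g n * x = x * Gprod g n"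
proof (induction n)
  case 0
  show ?case by simp
next
  case (Suc n)
  then have "Gprod g n * x = x * Gprod g n"
    and "g (2*n+2) * x = x * g (2*n+2)" and "g (2*n+1) * x = x * g (2*n+1)"
    by auto
  then show ?case by (simp add: commute_mult)
qed

definition sandwich :: "(nat \<Rightarrow> 'a::ring_1) \<Rightarrow> nat \<Rightarrow> 'a \<Rightarrow> 'a" where
  "sandwich g n x = Gprod g n * x * GprodT g n"

lemma sandwich_0 [simp]: "sandwich g 0 x = x"
  by (simp add: sandwich_def)

lemma sandwich_Suc:
  "sandwich g (Suc n) x = sandwich g n (g (2*n+2) * (g (2*n+1) * x * g (2*n+1)) * g (2*n+2))"
  by (simp add: sandwich_def mult.assoc)

lemma sandwich_add: "sandwich g n (x + y) = sandwich g n x + sandwich g n y"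
  by (simp add: sandwich_def distrib_left distrib_right)

lemma sandwich_mult_left:
  "(\<And>j. 1 \<le> j \<Longrightarrow> j \<le> 2*n \<Longrightarrow> g j * x = x * g j) \<Longrightarrow> sandwich g n (x * y) = x * sandwich g n y"
  unfolding sandwich_def by (simp add: Gprod_commute flip: mult.assoc)

locale complex_algebra =
  fixes emb :: "complex \<Rightarrow> 'a::ring_1"
  assumes emb_hom: "complex_alg_emb emb"
begin

lemma emb_add: "emb (x + y) = emb x + emb y"
  and emb_mult: "emb (x * y) = emb x * emb y"
  and emb_1 [simp]: "emb 1 = 1"
  using emb_hom unfolding complex_alg_emb_def by blast+

lemma emb_commute: "a * emb x = emb x * a"
  using emb_hom unfolding complex_alg_emb_def by (elim conjE allE) (rule sym)

lemma emb_0 [simp]: "emb 0 = 0"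
  using emb_add[of 0 0] by (metis add_0 add_cancel_right_right)

lemma emb_uminus: "emb (- x) = - emb x"
  using minus_unique[of "emb x" "emb (- x)"] emb_add[of x "- x"] by simp

lemma emb_left_commute: "a * (emb x * z) = emb x * (a * z)"
  by (simp add: emb_commute flip: mult.assoc)

lemma emb_mult_emb: "emb x * (emb y * z) = emb (x * y) * z"
  by (simp add: emb_mult mult.assoc)

lemma mult_emb_linear:
  assumes "a * a = emb s"
  shows "(emb x + emb y * a) * (emb x' + emb y' * a)
    = emb (x*x' + y*y'*s) + emb (x*y' + y*x') * a"
  using assms
  by (simp add: distrib_left distrib_right emb_add emb_mult_emb emb_left_commute[of a]
      emb_commute[of a] mult.assoc flip: emb_mult)

lemma gate_commute:
  assumes "x * h j = h j * x"
  shows "gate emb b h \<theta> j * x = x * gate emb b h \<theta> j"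
  by (simp add: gate_def distrib_left distrib_right mult.assoc emb_commute[of x]
      emb_left_commute[of x] assms)

lemma gate_reflect:
  "gate emb b h (\<lambda>i. - \<theta> i) j = emb (cos (\<theta> j / 2)) + emb (- (sin (\<theta> j / 2) / b j)) * h j"
  by (simp add: gate_def)

lemma gate_anticommute:
  assumes "x * h j = - (h j * x)"
  shows "gate emb b h \<theta> j * x = x * gate emb b h (\<lambda>i. - \<theta> i) j"
  unfolding gate_reflect
  by (simp add: gate_def algebra_simps emb_commute[of x] emb_left_commute[of x] emb_uminus assms)

lemma gate_square:
  assumes "h j * h j = emb (b j ^ 2)" and "b j \<noteq> 0"
  shows "gate emb b h \<theta> j * gate emb b h \<theta> j = 1 + emb (sin (\<theta> j) / b j) * h j"
proof -
  define t where "t = \<theta> j / 2"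
  have \<theta>: "\<theta> j = 2 * t"
    by (simp add: t_def)
  have "gate emb b h \<theta> j * gate emb b h \<theta> j
      = emb (cos t * cos t + sin t / b j * (sin t / b j) * b j ^ 2)
        + emb (cos t * (sin t / b j) + sin t / b j * cos t) * h j"
    unfolding gate_def t_def by (rule mult_emb_linear[OF assms(1)])
  also have "cos t * cos t + sin t / b j * (sin t / b j) * b j ^ 2 = 1"
    using assms(2) sin_cos_squared_add[of t] by (simp add: field_simps power2_eq_square)
  also have "cos t * (sin t / b j) + sin t / b j * cos t = sin (\<theta> j) / b j"
    unfolding \<theta> sin_double by (simp add: field_simps)
  finally show ?thesis
    by simp
qed

lemma gate_reflect_mult_gate:
  assumes "h j * h j = emb (b j ^ 2)" and "b j \<noteq> 0"
  shows "gate emb b h (\<lambda>i. - \<theta> i) j * gate emb b h \<theta> j = emb (cos (\<theta> j))"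
proof -
  define t where "t = \<theta> j / 2"
  have \<theta>: "\<theta> j = 2 * t"
    by (simp add: t_def)
  have "gate emb b h (\<lambda>i. - \<theta> i) j * gate emb b h \<theta> j
      = emb (cos t * cos t + - (sin t / b j) * (sin t / b j) * b j ^ 2)
        + emb (cos t * (sin t / b j) + - (sin t / b j) * cos t) * h j"
    unfolding gate_reflect unfolding gate_def t_def by (rule mult_emb_linear[OF assms(1)])
  also have "cos t * cos t + - (sin t / b j) * (sin t / b j) * b j ^ 2 = cos (\<theta> j)"
    using assms(2) unfolding \<theta> cos_double by (simp add: field_simps power2_eq_square)
  finally show ?thesis
    by simp
qed

end

locale ffd_algebra = complex_algebra emb for emb :: "complex \<Rightarrow> 'a::ring_1" +
  fixes N :: nat and h :: "nat \<Rightarrow> 'a" and b \<theta> :: "nat \<Rightarrow> complex"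
  assumes ffd: "FFD emb N h b"
    and b_nonzero: "\<And>j. 1 \<le> j \<Longrightarrow> j \<le> N \<Longrightarrow> b j \<noteq> 0"
begin

(* h', c and V at natural-number indices. Truncated subtraction sends every index <= 0 to 0,
   where H, C and V take the values 0, 1 and 1 that hp, cc and Vop give to all indices <= 0. *)
definition H :: "nat \<Rightarrow> 'a" where
  "H j = hp emb b h \<theta> (int j)"

definition C :: "nat \<Rightarrow> complex" where
  "C j = cc \<theta> (int j)"

definition V :: "nat \<Rightarrow> 'a" where
  "V j = Vop emb b h \<theta> (int j)"

abbreviation g :: "nat \<Rightarrow> 'a" where
  "g \<equiv> gate emb b h \<theta>"

abbreviation W :: "nat \<Rightarrow> 'a \<Rightarrow> 'a" where
  "W \<equiv> sandwich g"

lemma H_0 [simp]: "H 0 = 0"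
  by (simp add: H_def hp_def)

lemma H_pos: "0 < j \<Longrightarrow> H j = emb (sin (\<theta> j) / b j) * h j"
  by (simp add: H_def hp_def)

lemma C_0 [simp]: "C 0 = 1"
  by (simp add: C_def cc_def)

lemma C_pos: "0 < j \<Longrightarrow> C j = cos (\<theta> j)"
  by (simp add: C_def cc_def)

lemma h_square: "1 \<le> j \<Longrightarrow> j \<le> N \<Longrightarrow> h j * h j = emb (b j ^ 2)"
  using ffd unfolding FFD_def by blast

lemma h_commute: "1 \<le> i \<Longrightarrow> i \<le> N \<Longrightarrow> 1 \<le> j \<Longrightarrow> j \<le> N \<Longrightarrow> i + 2 < j \<or> j + 2 < i
    \<Longrightarrow> h i * h j = h j * h i"
  using ffd unfolding FFD_def by blast

lemma h_anticommute:
  assumes "1 \<le> i" "i \<le> N" "1 \<le> j" "j \<le> N" "i \<noteq> j" "i \<le> j + 2" "j \<le> i + 2"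
  shows "h i * h j = - (h j * h i)"
proof -
  have next1: "\<And>m. 1 \<le> m \<Longrightarrow> m + 1 \<le> N \<Longrightarrow> h m * h (m+1) = - (h (m+1) * h m)"
    and next2: "\<And>m. 1 \<le> m \<Longrightarrow> m + 2 \<le> N \<Longrightarrow> h m * h (m+2) = - (h (m+2) * h m)"
    using ffd unfolding FFD_def by blast+
  have ordered: "h m * h l = - (h l * h m)" if "1 \<le> m" "m < l" "l \<le> m + 2" "l \<le> N" for m l
  proof -
    have "l = m + 1 \<or> l = m + 2"
      using that by auto
    then show ?thesis
      using next1[of m] next2[of m] that by auto
  qed
  show ?thesis
  proof (cases "i < j")
    case True
    then show ?thesis using ordered assms by simp
  next
    case False
    then have "h j * h i = - (h i * h j)"
      using ordered[of j i] assms by simp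
    then show ?thesis by simp
  qed
qed

lemma H_h_commute:
  assumes "i \<le> N" "1 \<le> j" "j \<le> N" "i + 2 < j \<or> j + 2 < i"
  shows "H i * h j = h j * H i"
proof (cases "i = 0")
  case False
  then have "h i * h j = h j * h i"
    using assms by (intro h_commute) auto
  with False show ?thesis
    by (simp add: H_pos mult.assoc emb_left_commute[of "h j"])
qed simp

lemma H_h_anticommute:
  assumes "i \<le> N" "1 \<le> j" "j \<le> N" "i \<noteq> j" "i \<le> j + 2" "j \<le> i + 2"
  shows "H i * h j = - (h j * H i)"
proof (cases "i = 0")
  case False
  then have "h i * h j = - (h j * h i)"
    using assms by (intro h_anticommute) auto
  with False show ?thesis
    by (simp add: H_pos mult.assoc emb_left_commute[of "h j"])
qed simp

lemma H_commute:
  assumes "i \<le> N" "j \<le> N" "i = 0 \<or> i + 2 < j \<or> j + 2 < i"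
  shows "H i * H j = H j * H i"
proof (cases "i = 0 \<or> j = 0")
  case False
  then have "H i * h j = h j * H i"
    using assms by (intro H_h_commute) auto
  with False show ?thesis
    by (simp add: H_pos[of j] mult.assoc emb_left_commute[of "H i"])
qed auto

lemma H_anticommute:
  assumes "i \<le> N" "j \<le> N" "i \<noteq> j" "i \<le> j + 2" "j \<le> i + 2"
  shows "H i * H j = - (H j * H i)"
proof (cases "i = 0 \<or> j = 0")
  case False
  then have "H i * h j = - (h j * H i)"
    using assms by (intro H_h_anticommute) auto
  with False show ?thesis
    by (simp add: H_pos[of j] mult.assoc emb_left_commute[of "H i"])
qed auto

lemma g_square:
  assumes "1 \<le> j" "j \<le> N"
  shows "g j * g j = 1 + H j"
  using gate_square[where h=h and b=b and j=j, OF h_square[OF assms] b_nonzero[OF assms]] assms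
  by (simp add: H_pos)

lemma g_reflect_mult_g:
  assumes "1 \<le> j" "j \<le> N"
  shows "gate emb b h (\<lambda>i. - \<theta> i) j * g j = emb (C j)"
  using gate_reflect_mult_gate[where h=h and b=b and j=j, OF h_square[OF assms] b_nonzero[OF assms]]
    assms
  by (simp add: C_pos)

lemma g_conj_commute:
  assumes "1 \<le> j" "j \<le> N" "x * h j = h j * x"
  shows "g j * x * g j = x * (1 + H j)"
proof -
  have "g j * x = x * g j"
    using assms(3) by (rule gate_commute)
  then show ?thesis
    using g_square[OF assms(1,2)] by (simp add: mult.assoc)
qed

lemma g_conj_anticommute:
  assumes "1 \<le> j" "j \<le> N" "x * h j = - (h j * x)"
  shows "g j * x * g j = emb (C j) * x"
proof -
  have "g j * x = x * gate emb b h (\<lambda>i. - \<theta> i) j"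
    using assms(3) by (rule gate_anticommute)
  then show ?thesis
    using g_reflect_mult_g[OF assms(1,2)] by (simp add: mult.assoc emb_commute[of x])
qed

lemma g_conj_emb: "g j * (emb c * x) * g j = emb c * (g j * x * g j)"
  by (simp add: mult.assoc emb_left_commute[of "g j"])

lemma W_mult_left:
  assumes "\<And>j. 1 \<le> j \<Longrightarrow> j \<le> 2*n \<Longrightarrow> x * h j = h j * x"
  shows "W n (x * y) = x * W n y"
  using assms by (intro sandwich_mult_left gate_commute) auto

lemma W_emb: "W n (emb c * y) = emb c * W n y"
  by (rule W_mult_left) (rule emb_commute[symmetric])

lemma W_Suc_one:
  assumes "2*p+2 \<le> N"
  shows "W (Suc p) 1 = W p 1 + W p (H (2*p+2)) + emb (C (2*p+2)) * W p (H (2*p+1))"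
proof -
  have "g (2*p+2) * H (2*p+1) * g (2*p+2) = emb (C (2*p+2)) * H (2*p+1)"
    using assms by (intro g_conj_anticommute H_h_anticommute) auto
  then have "g (2*p+2) * (g (2*p+1) * 1 * g (2*p+1)) * g (2*p+2)
      = 1 + H (2*p+2) + emb (C (2*p+2)) * H (2*p+1)"
    using assms by (simp add: g_square distrib_left distrib_right)
  then show ?thesis
    by (simp add: sandwich_Suc sandwich_add W_emb)
qed

lemma W_Suc_H_odd:
  assumes "2*p+3 \<le> N"
  shows "W (Suc p) (H (2*p+3)) = emb (C (2*p+2) * C (2*p+1)) * H (2*p+3) * W p 1"
proof -
  have "g (2*p+1) * H (2*p+3) * g (2*p+1) = emb (C (2*p+1)) * H (2*p+3)"
    and "g (2*p+2) * H (2*p+3) * g (2*p+2) = emb (C (2*p+2)) * H (2*p+3)"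
    using assms by (intro g_conj_anticommute H_h_anticommute; simp)+
  then have "g (2*p+2) * (g (2*p+1) * H (2*p+3) * g (2*p+1)) * g (2*p+2)
      = emb (C (2*p+2) * C (2*p+1)) * H (2*p+3)"
    by (simp add: g_conj_emb emb_mult_emb mult.commute)
  moreover have "W p (H (2*p+3) * 1) = H (2*p+3) * W p 1"
    using assms by (intro W_mult_left H_h_commute) auto
  ultimately show ?thesis
    by (simp add: sandwich_Suc W_emb mult.assoc)
qed

lemma W_H_odd:
  assumes "2*p+1 \<le> N"
  shows "W p (H (2*p+1)) = emb (C (2*p) * C (2*p-1)) * H (2*p+1) * W (p-1) 1"
proof (cases p)
  case (Suc q)
  then show ?thesis
    using W_Suc_H_odd[of q] assms by (simp add: numeral_eq_Suc)
qed simp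

lemma W_Suc_H_even:
  assumes "2*p+4 \<le> N"
  shows "W (Suc p) (H (2*p+4))
    = H (2*p+4) * (emb (C (2*p+2)) * W p 1 + W p (H (2*p+1)) + W p (H (2*p+1) * H (2*p+2)))"
proof -
  have "H (2*p+4) * h (2*p+1) = h (2*p+1) * H (2*p+4)"
    using assms by (intro H_h_commute) auto
  then have 1: "g (2*p+1) * H (2*p+4) * g (2*p+1) = H (2*p+4) * (1 + H (2*p+1))"
    using assms by (intro g_conj_commute) auto
  have anti: "H (2*p+4) * h (2*p+2) = - (h (2*p+2) * H (2*p+4))"
    "H (2*p+1) * h (2*p+2) = - (h (2*p+2) * H (2*p+1))"
    using assms by (intro H_h_anticommute; simp)+
  then have 2: "g (2*p+2) * H (2*p+4) * g (2*p+2) = emb (C (2*p+2)) * H (2*p+4)"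
    using assms by (intro g_conj_anticommute) auto
  from anti have 3: "g (2*p+2) * (H (2*p+4) * H (2*p+1)) * g (2*p+2)
      = H (2*p+4) * H (2*p+1) * (1 + H (2*p+2))"
    using assms by (intro g_conj_commute anticommute_mult_anticommute) auto
  have "g (2*p+2) * (g (2*p+1) * H (2*p+4) * g (2*p+1)) * g (2*p+2)
      = g (2*p+2) * H (2*p+4) * g (2*p+2) + g (2*p+2) * (H (2*p+4) * H (2*p+1)) * g (2*p+2)"
    unfolding 1 by (simp add: distrib_left distrib_right)
  also have "\<dots> = H (2*p+4) * (emb (C (2*p+2)) * 1 + H (2*p+1) + H (2*p+1) * H (2*p+2))"
    unfolding 2 3 by (simp add: distrib_left mult.assoc add.assoc emb_commute[of "H (2*p+4)"])
  finally have layer: "g (2*p+2) * (g (2*p+1) * H (2*p+4) * g (2*p+1)) * g (2*p+2)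
      = H (2*p+4) * (emb (C (2*p+2)) * 1 + H (2*p+1) + H (2*p+1) * H (2*p+2))" .
  have "W p (H (2*p+4) * y) = H (2*p+4) * W p y" for y
    using assms by (intro W_mult_left H_h_commute) auto
  then show ?thesis
    by (simp only: sandwich_Suc layer sandwich_add W_emb)
qed

lemma W_Suc_H_pair:
  assumes "2*p+4 \<le> N"
  shows "W (Suc p) (H (2*p+3) * H (2*p+4)) = emb (C (2*p+1)) * (H (2*p+3) * H (2*p+4))
    * (W (Suc p) 1 - emb (C (2*p+2) * C (2*p) * C (2*p-1)) * H (2*p+1) * W (p-1) 1)"
proof -
  let ?Q = "H (2*p+3) * H (2*p+4)"
  have "?Q * h (2*p+1) = - (h (2*p+1) * ?Q)"
    using assms by (intro anticommute_mult_commute H_h_anticommute H_h_commute) auto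
  then have 1: "g (2*p+1) * ?Q * g (2*p+1) = emb (C (2*p+1)) * ?Q"
    using assms by (intro g_conj_anticommute) auto
  have "?Q * h (2*p+2) = h (2*p+2) * ?Q"
    using assms by (intro anticommute_mult_anticommute H_h_anticommute) auto
  then have 2: "g (2*p+2) * ?Q * g (2*p+2) = ?Q * (1 + H (2*p+2))"
    using assms by (intro g_conj_commute) auto
  have "?Q * h j = h j * ?Q" if "1 \<le> j" "j \<le> 2*p" for j
    using assms that by (intro commute_mult H_h_commute) auto
  then have Q_left: "W p (?Q * y) = ?Q * W p y" for y
    by (rule W_mult_left)
  have "W (Suc p) ?Q = emb (C (2*p+1)) * (?Q * (W p 1 + W p (H (2*p+2))))"
    by (simp only: sandwich_Suc 1 g_conj_emb 2 W_emb Q_left sandwich_add)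
  also have "W p 1 + W p (H (2*p+2)) = W (Suc p) 1 - emb (C (2*p+2)) * W p (H (2*p+1))"
    using W_Suc_one assms by simp
  also have "W p (H (2*p+1)) = emb (C (2*p) * C (2*p-1)) * H (2*p+1) * W (p-1) 1"
    using assms by (intro W_H_odd) simp
  finally show ?thesis
    by (simp add: emb_mult_emb mult.assoc)
qed

lemma W_H_pair:
  assumes "2*n+2 \<le> N"
  shows "W n (H (2*n+1) * H (2*n+2)) = emb (C (2*n-1)) * (H (2*n+1) * H (2*n+2))
    * (W n 1 - emb (C (2*n) * C (2*n-2) * C (2*n-3)) * H (2*n-1) * W (n-2) 1)"
proof (cases n)
  case (Suc p)
  then show ?thesis
    using W_Suc_H_pair[of p] assms by (simp add: numeral_eq_Suc)
qed simp

lemma V_double_eq_W: "V (2*m) = W m 1"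
  by (simp add: V_def Vop_def Veven_def sandwich_def nat_mult_distrib)

lemma V_0 [simp]: "V 0 = 1"
  by (simp add: V_def Vop_def)

lemma V_odd_eq_W:
  assumes "2*q+2 \<le> N"
  shows "V (2*q+1) = W q 1 + W q (H (2*q+1))"
proof -
  let ?g = "gate emb b h (\<theta>(2*q+2 := 0))"
  have "Gprod ?g q = Gprod g q" "GprodT ?g q = GprodT g q"
    by (auto intro!: Gprod_cong GprodT_cong simp: gate_def)
  moreover have "?g (2*q+2) = 1" "?g (2*q+1) = g (2*q+1)"
    by (simp_all add: gate_def)
  ultimately have "V (2*q+1) = W q (g (2*q+1) * g (2*q+1))"
    by (simp add: V_def Vop_def Veven_def sandwich_def nat_add_distrib nat_mult_distrib
        mult.assoc)
  then show ?thesis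
    using assms by (simp add: g_square sandwich_add)
qed

lemma V_odd_recurrence:
  assumes "1 \<le> k" "2*k \<le> N"
  shows "V (2*k-1) = V (2*k-2) + emb (C (2*k-2) * C (2*k-3)) * H (2*k-1) * V (2*k-4)"
proof -
  obtain q where k: "k = Suc q"
    using assms(1) by (cases k) auto
  have "V (2*q+1) = W q 1 + W q (H (2*q+1))"
    using assms k by (intro V_odd_eq_W) simp
  also have "W q (H (2*q+1)) = emb (C (2*q) * C (2*q-1)) * H (2*q+1) * W (q-1) 1"
    using assms k by (intro W_H_odd) simp
  finally show ?thesis
    using k by (simp add: diff_mult_distrib2 flip: V_double_eq_W)
qed

lemma H_reorder:
  assumes "2*p+4 \<le> N"
  shows "H (2*p+4) * (H (2*p+1) * (H (2*p+2) * z)) = H (2*p+2) * (H (2*p+1) * (H (2*p+4) * z))"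
    and "H (2*p-1) * (H (2*p+2) * (H (2*p+1) * (H (2*p+4) * z)))
      = - (H (2*p+2) * (H (2*p+1) * (H (2*p+4) * (H (2*p-1) * z))))"
proof -
  have "H (2*p+4) * (H (2*p+1) * z) = H (2*p+1) * (H (2*p+4) * z)"
    and "H (2*p-1) * (H (2*p+2) * z) = H (2*p+2) * (H (2*p-1) * z)"
    and "H (2*p-1) * (H (2*p+4) * z) = H (2*p+4) * (H (2*p-1) * z)" for z
    using assms by (intro left_commute_of_commute H_commute; arith)+
  moreover have "H (2*p+4) * (H (2*p+2) * z) = - (H (2*p+2) * (H (2*p+4) * z))"
    and "H (2*p+1) * (H (2*p+2) * z) = - (H (2*p+2) * (H (2*p+1) * z))"
    and "H (2*p-1) * (H (2*p+1) * z) = - (H (2*p+1) * (H (2*p-1) * z))" for z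
    using assms by (intro left_anticommute_of_anticommute H_anticommute; arith)+
  ultimately show
    "H (2*p+4) * (H (2*p+1) * (H (2*p+2) * z)) = H (2*p+2) * (H (2*p+1) * (H (2*p+4) * z))"
    and "H (2*p-1) * (H (2*p+2) * (H (2*p+1) * (H (2*p+4) * z)))
      = - (H (2*p+2) * (H (2*p+1) * (H (2*p+4) * (H (2*p-1) * z))))"
    by simp_all
qed

lemma V_even_step:
  assumes "2*p+4 \<le> N"
  shows "V (2*p+4) = V (2*p+2)
    + (emb (C (2*p+2)) * H (2*p+4) + emb (C (2*p+4) * C (2*p+2) * C (2*p+1)) * H (2*p+3)
       + emb (C (2*p-1)) * H (2*p+2) * H (2*p+1) * H (2*p+4)) * V (2*p)
    + emb (C (2*p) * C (2*p-1)) * H (2*p+4) * H (2*p+1) * V (2*p-2)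
    + emb (C (2*p) * C (2*p-1) * C (2*p-2) * C (2*p-3))
        * H (2*p-1) * H (2*p+2) * H (2*p+1) * H (2*p+4) * V (2*p-4)"
proof -
  have V: "V (2*p+4) = W (Suc (Suc p)) 1" "V (2*p+2) = W (Suc p) 1" "V (2*p) = W p 1"
      "V (2*p-2) = W (p-1) 1" "V (2*p-4) = W (p-2) 1"
    using V_double_eq_W[of "Suc (Suc p)"] V_double_eq_W[of "Suc p"] V_double_eq_W[of p]
      V_double_eq_W[of "p-1"] V_double_eq_W[of "p-2"]
    by (simp_all add: diff_mult_distrib2 numeral_eq_Suc)
  have "W (Suc (Suc p)) 1
      = W (Suc p) 1 + W (Suc p) (H (2*p+4)) + emb (C (2*p+4)) * W (Suc p) (H (2*p+3))"
    using W_Suc_one[of "Suc p"] assms by (simp add: numeral_eq_Suc)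
  also have "W (Suc p) (H (2*p+3)) = emb (C (2*p+2) * C (2*p+1)) * H (2*p+3) * W p 1"
    using assms by (intro W_Suc_H_odd) simp
  also have "W (Suc p) (H (2*p+4))
      = H (2*p+4) * (emb (C (2*p+2)) * W p 1 + W p (H (2*p+1)) + W p (H (2*p+1) * H (2*p+2)))"
    using assms by (rule W_Suc_H_even)
  also have "W p (H (2*p+1)) = emb (C (2*p) * C (2*p-1)) * H (2*p+1) * W (p-1) 1"
    using assms by (intro W_H_odd) simp
  also have "W p (H (2*p+1) * H (2*p+2)) = emb (C (2*p-1)) * (H (2*p+1) * H (2*p+2))
      * (W p 1 - emb (C (2*p) * C (2*p-2) * C (2*p-3)) * H (2*p-1) * W (p-2) 1)"
    using assms by (intro W_H_pair) simp
  finally have expanded: "V (2*p+4) = V (2*p+2)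
    + H (2*p+4) * (emb (C (2*p+2)) * V (2*p) + emb (C (2*p) * C (2*p-1)) * H (2*p+1) * V (2*p-2)
      + emb (C (2*p-1)) * (H (2*p+1) * H (2*p+2))
        * (V (2*p) - emb (C (2*p) * C (2*p-2) * C (2*p-3)) * H (2*p-1) * V (2*p-4)))
    + emb (C (2*p+4)) * (emb (C (2*p+2) * C (2*p+1)) * H (2*p+3) * V (2*p))"
    unfolding V .
  \<comment> \<open>Naming the factors stops simp from normalising their indices, which would defeat the
    reordering rules.\<close>
  define x0 x1 x2 x4 where "x0 = H (2*p-1)" and "x1 = H (2*p+1)" and "x2 = H (2*p+2)"
    and "x4 = H (2*p+4)"
  note x_defs = x0_def x1_def x2_def x4_def
  show ?thesis
    using expanded[folded x_defs] H_reorder[OF assms, folded x_defs] unfolding x_defs[symmetric]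
    by (simp add: algebra_simps emb_mult_emb emb_left_commute[of x1] emb_left_commute[of x2]
        emb_left_commute[of x4] flip: emb_mult)
qed

lemma V_even_recurrence:
  assumes "1 \<le> k" "2*k \<le> N"
  shows "V (2*k) = V (2*k-2)
    + (emb (C (2*k-2)) * H (2*k) + emb (C (2*k) * C (2*k-2) * C (2*k-3)) * H (2*k-1)
       + emb (C (2*k-5)) * H (2*k-2) * H (2*k-3) * H (2*k)) * V (2*k-4)
    + emb (C (2*k-4) * C (2*k-5)) * H (2*k) * H (2*k-3) * V (2*k-6)
    + emb (C (2*k-4) * C (2*k-5) * C (2*k-6) * C (2*k-7))
        * H (2*k-5) * H (2*k-2) * H (2*k-3) * H (2*k) * V (2*k-8)"
proof (cases "k = 1")
  case True
  then show ?thesis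
    using W_Suc_one[of 0] V_double_eq_W[of 1] assms by (simp add: numeral_2_eq_2)
next
  case False
  define p where "p = k - 2"
  have k: "k = p + 2"
    using assms(1) False unfolding p_def by simp
  have "2*k-1 = 2*p+3" "2*k-2 = 2*p+2" "2*k-3 = 2*p+1" "2*k-4 = 2*p" "2*k-5 = 2*p-1"
    "2*k-6 = 2*p-2" "2*k-7 = 2*p-3" "2*k-8 = 2*p-4" "2*k = 2*p+4"
    using k by simp_all
  then show ?thesis
    using V_even_step[of p] assms k by (simp only:)
qed

lemma hp_eq_H: "hp emb b h \<theta> j = H (nat j)"
  by (simp add: H_def hp_def)

lemma cc_eq_C: "cc \<theta> j = C (nat j)"
  by (simp add: C_def cc_def)

lemma Vop_eq_V: "Vop emb b h \<theta> j = V (nat j)"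
  by (simp add: V_def Vop_def)

end

theorem mainTheorem11:
  fixes emb :: "complex \<Rightarrow> 'a::ring_1"
    and h :: "nat \<Rightarrow> 'a" and b \<theta> :: "nat \<Rightarrow> complex" and k :: nat
  assumes "complex_alg_emb emb"
    and "k \<ge> 1"
    and "FFD emb (2*k) h b"
    and "\<forall>j. 1 \<le> j \<and> j \<le> 2*k \<longrightarrow> b j \<noteq> 0"
    and "\<forall>j. 1 \<le> j \<and> j \<le> 2*k \<longrightarrow> cos (\<theta> j) \<noteq> 0"
  defines "V \<equiv> Vop emb b h \<theta>" and "c \<equiv> cc \<theta>" and "h' \<equiv> hp emb b h \<theta>"
    and "K \<equiv> int k"
  shows "(V (2*K) = V (2*K-2)
           + (emb (c (2*K-2)) * h' (2*K)
              + emb (c (2*K) * c (2*K-2) * c (2*K-3)) * h' (2*K-1)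
              + emb (c (2*K-5)) * h' (2*K-2) * h' (2*K-3) * h' (2*K)) * V (2*K-4)
           + emb (c (2*K-4) * c (2*K-5)) * h' (2*K) * h' (2*K-3) * V (2*K-6)
           + emb (c (2*K-4) * c (2*K-5) * c (2*K-6) * c (2*K-7))
               * h' (2*K-5) * h' (2*K-2) * h' (2*K-3) * h' (2*K) * V (2*K-8)) \<and>
         (V (2*K-1) = V (2*K-2) + emb (c (2*K-2) * c (2*K-3)) * h' (2*K-1) * V (2*K-4))"
proof -
  \<comment> \<open>Named before the interpretation, whose own V_def would shadow this one.\<close>
  note defs = V_def c_def h'_def K_def
  interpret ffd_algebra emb "2*k" h b \<theta>
    using assms(1,3,4) by unfold_locales auto
  show ?thesis
    unfolding defs hp_eq_H cc_eq_C Vop_eq_V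
    using V_even_recurrence[of k] V_odd_recurrence[of k] assms(2)
    by (simp add: nat_diff_distrib' nat_mult_distrib)
qed

end
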